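(* Let $g\colon A\to D$ be an epimorphism from a finitely generated lattice $A$ onto a lattice $D$ with finite generating set $P$ for which $D$ satisfies Dean's condition (D). Then $g$ is lower bounded if and only if for every $p\in P$ the preimage $g^{-1}(p)$ has a least element.
   Context: A lattice homomorphism $g\colon A\to D$ is lower bounded if for every $d\in D$ the set $\{x\in A: g(x)\ge d\}$ is empty or has a least element (for surjective $g$: every preimage $g^{-1}(d)$ has a least element). Dean's condition (D) for $D$ with finite generating set $P$: for all finite $S,T\subseteq D$ with $\bigwedge S\le\bigvee T$, either some $s\in S$ has $s\le\bigvee T$, or some $t\in T$ has $\bigwedge S\le t$, or some $p\in P$ has $\bigwedge S\le p\le\bigvee T$. *)

theory Defs
  imports Main
begin

text \<open>Lattices are represented by types of class lattice; the whole type is the carrier.\<close>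

inductive_set lat_gen :: "'a::lattice set \<Rightarrow> 'a set" for X :: "'a set" where
  base: "x \<in> X \<Longrightarrow> x \<in> lat_gen X"
| inf: "x \<in> lat_gen X \<Longrightarrow> y \<in> lat_gen X \<Longrightarrow> inf x y \<in> lat_gen X"
| sup: "x \<in> lat_gen X \<Longrightarrow> y \<in> lat_gen X \<Longrightarrow> sup x y \<in> lat_gen X"

definition generates :: "'a::lattice set \<Rightarrow> bool" where
  "generates X \<longleftrightarrow> lat_gen X = UNIV"

definition finitely_generated_lattice :: "'a::lattice itself \<Rightarrow> bool" where
  "finitely_generated_lattice _ \<longleftrightarrow> (\<exists>X::'a set. finite X \<and> generates X)"

definition lattice_hom :: "('a::lattice \<Rightarrow> 'b::lattice) \<Rightarrow> bool" where
  "lattice_hom g \<longleftrightarrow> (\<forall>x y. g (inf x y) = inf (g x) (g y) \<and> g (sup x y) = sup (g x) (g y))"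

definition lower_bounded :: "('a::lattice \<Rightarrow> 'b::lattice) \<Rightarrow> bool" where
  "lower_bounded g \<longleftrightarrow> (\<forall>d. {x. d \<le> g x} = {} \<or> (\<exists>m. m \<in> {x. d \<le> g x} \<and> (\<forall>x\<in>{x. d \<le> g x}. m \<le> x)))"

definition has_least :: "'a::order set \<Rightarrow> bool" where
  "has_least S \<longleftrightarrow> (\<exists>m\<in>S. \<forall>x\<in>S. m \<le> x)"

definition dean_condition :: "'b::lattice set \<Rightarrow> bool" where
  "dean_condition P \<longleftrightarrow>
    (\<forall>S T. finite S \<and> S \<noteq> {} \<and> finite T \<and> T \<noteq> {} \<and> Inf_fin S \<le> Sup_fin T \<longrightarrow>
       (\<exists>s\<in>S. s \<le> Sup_fin T) \<or> (\<exists>t\<in>T. Inf_fin S \<le> t) \<or>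
       (\<exists>p\<in>P. Inf_fin S \<le> p \<and> p \<le> Sup_fin T))"

end

theory Submission
  imports Defs
begin

text \<open>
  A surjective homomorphism \<open>g\<close> is lower bounded iff every \<open>d\<close> has a least element \<open>\<beta>(d)\<close>
  in \<open>{x. d \<le> g x}\<close>; for \<open>d = p \<in> P\<close> this is the least element of \<open>g\<^sup>-\<^sup>1(p)\<close>. The set of \<open>d\<close>
  admitting \<open>\<beta>(d)\<close> contains \<open>P\<close> and is closed under joins (\<open>\<beta>(d\<^sub>1 \<squnion> d\<^sub>2) = \<beta>(d\<^sub>1) \<squnion> \<beta>(d\<^sub>2)\<close>), so it
  suffices to show closure under meets. For \<open>d = d\<^sub>1 \<sqinter> d\<^sub>2\<close> the candidate is the meet of the
  finitely many elements \<open>\<beta>(d\<^sub>1)\<close>, \<open>\<beta>(d\<^sub>2)\<close>, \<open>\<beta>(p)\<close> for \<open>d \<le> p \<in> P\<close>, and the generators \<open>x\<close> of \<open>A\<close>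
  with \<open>d \<le> g x\<close>. That it lies below every \<open>y\<close> with \<open>d \<le> g y\<close> follows by induction on a
  lattice term for \<open>y\<close> in the generators; the join case is exactly what Dean's condition
  handles.
\<close>

lemma lattice_hom_mono:
  assumes "lattice_hom g" "x \<le> y"
  shows "g x \<le> g y"
  by (metis assms inf.absorb_iff1 lattice_hom_def)

lemma lattice_hom_Inf_fin:
  assumes "lattice_hom g" "finite M" "M \<noteq> {}"
  shows "g (Inf_fin M) = Inf_fin (g ` M)"
  using assms(2,3)
proof (induction M rule: finite_ne_induct)
  case (insert x F)
  then show ?case using assms(1) by (simp add: lattice_hom_def)
qed simp

definition least_above :: "('a::lattice \<Rightarrow> 'b::lattice) \<Rightarrow> 'b \<Rightarrow> 'a \<Rightarrow> bool" where
  "least_above g d m \<longleftrightarrow> d \<le> g m \<and> (\<forall>y. d \<le> g y \<longrightarrow> m \<le> y)"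

lemma lower_bounded_iff_least_above:
  "lower_bounded g \<longleftrightarrow> (\<forall>d. (\<exists>x. d \<le> g x) \<longrightarrow> (\<exists>m. least_above g d m))"
  unfolding lower_bounded_def least_above_def by blast

lemma has_least_preimage_iff_least_above:
  assumes hom: "lattice_hom g" and "d \<in> range g"
  shows "has_least (g -` {d}) \<longleftrightarrow> (\<exists>m. least_above g d m)"
proof
  assume "has_least (g -` {d})"
  then obtain m where gm: "g m = d" and least: "\<And>y. g y = d \<Longrightarrow> m \<le> y"
    unfolding has_least_def by auto
  have "m \<le> y" if "d \<le> g y" for y
  proof -
    have "g (inf m y) = d"
      using hom gm that by (simp add: lattice_hom_def inf_absorb1)
    then show ?thesis using least le_infE by blast
  qed
  then show "\<exists>m. least_above g d m" using gm unfolding least_above_def by auto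
next
  assume "\<exists>m. least_above g d m"
  then obtain m where dm: "d \<le> g m" and least: "\<And>y. d \<le> g y \<Longrightarrow> m \<le> y"
    unfolding least_above_def by blast
  obtain x where gx: "g x = d" using \<open>d \<in> range g\<close> by auto
  have "m \<le> x" using least gx by simp
  then have "g m \<le> d" using lattice_hom_mono[OF hom] gx by blast
  then have "g m = d" using dm by simp
  then show "has_least (g -` {d})"
    unfolding has_least_def using least by (metis order_refl vimage_singleton_eq)
qed

lemma least_above_sup:
  assumes "lattice_hom g" "least_above g d\<^sub>1 m\<^sub>1" "least_above g d\<^sub>2 m\<^sub>2"
  shows "least_above g (sup d\<^sub>1 d\<^sub>2) (sup m\<^sub>1 m\<^sub>2)"
  using assms by (auto simp: least_above_def lattice_hom_def intro: sup.coboundedI1 sup.coboundedI2)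

lemma dean_lower_bound_lat_gen:
  assumes hom: "lattice_hom g" and dean: "dean_condition P"
    and below\<^sub>1: "\<And>y. d\<^sub>1 \<le> g y \<Longrightarrow> c \<le> y"
    and below\<^sub>2: "\<And>y. d\<^sub>2 \<le> g y \<Longrightarrow> c \<le> y"
    and below_P: "\<And>p y. p \<in> P \<Longrightarrow> inf d\<^sub>1 d\<^sub>2 \<le> p \<Longrightarrow> p \<le> g y \<Longrightarrow> c \<le> y"
    and below_X: "\<And>x. x \<in> X \<Longrightarrow> inf d\<^sub>1 d\<^sub>2 \<le> g x \<Longrightarrow> c \<le> x"
  shows "y \<in> lat_gen X \<Longrightarrow> inf d\<^sub>1 d\<^sub>2 \<le> g y \<Longrightarrow> c \<le> y"
proof (induction y rule: lat_gen.induct)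
  case (base x)
  then show ?case by (rule below_X)
next
  case (inf y\<^sub>1 y\<^sub>2)
  then show ?case using hom by (simp add: lattice_hom_def)
next
  case (sup y\<^sub>1 y\<^sub>2)
  have g_sup: "g (sup y\<^sub>1 y\<^sub>2) = Sup_fin {g y\<^sub>1, g y\<^sub>2}"
    using hom by (simp add: lattice_hom_def)
  have "Inf_fin {d\<^sub>1, d\<^sub>2} \<le> Sup_fin {g y\<^sub>1, g y\<^sub>2}"
    using sup.prems g_sup by simp
  then consider
      s where "s \<in> {d\<^sub>1, d\<^sub>2}" "s \<le> g (sup y\<^sub>1 y\<^sub>2)"
    | t where "t \<in> {g y\<^sub>1, g y\<^sub>2}" "inf d\<^sub>1 d\<^sub>2 \<le> t"
    | p where "p \<in> P" "inf d\<^sub>1 d\<^sub>2 \<le> p" "p \<le> g (sup y\<^sub>1 y\<^sub>2)"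
    using dean[unfolded dean_condition_def, rule_format, of "{d\<^sub>1, d\<^sub>2}" "{g y\<^sub>1, g y\<^sub>2}"] g_sup
    by auto
  then show ?case
  proof cases
    case 1
    then show ?thesis using below\<^sub>1 below\<^sub>2 by blast
  next
    case 2
    then show ?thesis using sup.IH by (auto intro: le_supI1 le_supI2)
  next
    case 3
    then show ?thesis by (rule below_P)
  qed
qed

lemma least_above_inf:
  fixes g :: "'a::lattice \<Rightarrow> 'b::lattice" and X :: "'a set"
  assumes hom: "lattice_hom g" and dean: "dean_condition P" and "finite P"
    and least_P: "\<And>p. p \<in> P \<Longrightarrow> least_above g p (b p)"
    and "finite X" and gen_X: "generates X"
    and m\<^sub>1: "least_above g d\<^sub>1 m\<^sub>1" and m\<^sub>2: "least_above g d\<^sub>2 m\<^sub>2"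
  shows "\<exists>m. least_above g (inf d\<^sub>1 d\<^sub>2) m"
proof -
  define d where "d = inf d\<^sub>1 d\<^sub>2"
  define M where "M = {m\<^sub>1, m\<^sub>2} \<union> {x\<in>X. d \<le> g x} \<union> b ` {p\<in>P. d \<le> p}"
  have M: "finite M" "M \<noteq> {}"
    unfolding M_def using \<open>finite X\<close> \<open>finite P\<close> by auto
  have "d \<le> g m" if "m \<in> M" for m
    using that m\<^sub>1 m\<^sub>2 least_P
    by (auto simp: M_def d_def least_above_def intro: inf.coboundedI1 inf.coboundedI2 order_trans)
  then have "d \<le> g (Inf_fin M)"
    using lattice_hom_Inf_fin[OF hom M] M by (simp add: Inf_fin.bounded_iff)
  moreover have "Inf_fin M \<le> y" if "d \<le> g y" for y
  proof (rule dean_lower_bound_lat_gen[OF hom dean])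
    have below_M: "m \<in> M \<Longrightarrow> m \<le> y \<Longrightarrow> Inf_fin M \<le> y" for m y
      using M Inf_fin.coboundedI order_trans by blast
    show "Inf_fin M \<le> y" if "d\<^sub>1 \<le> g y" for y
      using that m\<^sub>1 below_M[of m\<^sub>1] unfolding least_above_def M_def by blast
    show "Inf_fin M \<le> y" if "d\<^sub>2 \<le> g y" for y
      using that m\<^sub>2 below_M[of m\<^sub>2] unfolding least_above_def M_def by blast
    show "Inf_fin M \<le> y" if "p \<in> P" "inf d\<^sub>1 d\<^sub>2 \<le> p" "p \<le> g y" for p y
      using that least_P[of p] below_M[of "b p"] unfolding least_above_def M_def d_def by blast
    show "Inf_fin M \<le> x" if "x \<in> X" "inf d\<^sub>1 d\<^sub>2 \<le> g x" for x
      using that below_M[of x] unfolding M_def d_def by blast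
    show "y \<in> lat_gen X" using gen_X unfolding generates_def by simp
    show "inf d\<^sub>1 d\<^sub>2 \<le> g y" using that unfolding d_def .
  qed
  ultimately show ?thesis unfolding least_above_def d_def by blast
qed

lemma least_above_everywhere:
  fixes g :: "'a::lattice \<Rightarrow> 'b::lattice"
  assumes hom: "lattice_hom g" and fg: "finitely_generated_lattice TYPE('a)"
    and "finite P" and gen_P: "generates P" and dean: "dean_condition P"
    and least_P: "\<And>p. p \<in> P \<Longrightarrow> \<exists>m. least_above g p m"
  shows "\<exists>m. least_above g d m"
proof -
  obtain b where b: "\<And>p. p \<in> P \<Longrightarrow> least_above g p (b p)"
    using least_P by metis
  obtain X :: "'a set" where "finite X" "generates X"
    using fg unfolding finitely_generated_lattice_def by blast
  have "d \<in> lat_gen P" using gen_P unfolding generates_def by simp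
  then show ?thesis
  proof (induction d rule: lat_gen.induct)
    case (base p)
    then show ?case by (rule least_P)
  next
    case (inf d\<^sub>1 d\<^sub>2)
    then show ?case
      using least_above_inf[OF hom dean \<open>finite P\<close> b \<open>finite X\<close> \<open>generates X\<close>] by blast
  next
    case (sup d\<^sub>1 d\<^sub>2)
    then show ?case using least_above_sup[OF hom] by blast
  qed
qed

theorem mainTheorem11:
  fixes g :: "'a::lattice \<Rightarrow> 'b::lattice" and P :: "'b set"
  assumes "finitely_generated_lattice TYPE('a)"
    and "lattice_hom g" and "surj g"
    and "finite P" and "generates P"
    and "dean_condition P"
  shows "lower_bounded g \<longleftrightarrow> (\<forall>p\<in>P. has_least (g -` {p}))"
proof -
  have least_preimage: "has_least (g -` {d}) \<longleftrightarrow> (\<exists>m. least_above g d m)" for d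
    using has_least_preimage_iff_least_above[OF assms(2)] \<open>surj g\<close> by simp
  have "lower_bounded g \<longleftrightarrow> (\<forall>d. \<exists>m. least_above g d m)"
    using \<open>surj g\<close> unfolding lower_bounded_iff_least_above by (metis order_refl surjD)
  also have "\<dots> \<longleftrightarrow> (\<forall>p\<in>P. \<exists>m. least_above g p m)"
    using least_above_everywhere[OF assms(2,1,4,5,6)] by blast
  finally show ?thesis using least_preimage by simp
qed

end
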